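(* Let $m\ge 1$, $n\ge 1$ be integers, let $K\in\{\mathbb{R},\mathbb{C}\}$, and let $\mathcal{Z}$ be either $\mathbb{Z}^m$ or $\{t\in\mathbb{Z}^m \mid t\ge t_1\}$ for some $t_1\in\mathbb{Z}^m$. Let $A_\alpha\colon\mathcal{Z}\to\mathcal{M}_n(K)$, $\alpha\in\{1,\dots,m\}$, be matrix functions satisfying the compatibility relations $$A_\alpha(t+1_\beta)A_\beta(t)=A_\beta(t+1_\alpha)A_\alpha(t),\quad \forall t\in\mathcal{Z},\ \forall \alpha,\beta\in\{1,\dots,m\}.$$ Let $T=(T_1,\dots,T_m)\in\mathbb{N}^m$, $T\neq 0$, and suppose that $A_\alpha(t+T_\beta\cdot 1_\beta)=A_\alpha(t)$ for all $\alpha,\beta\in\{1,\dots,m\}$ and all $t\in\mathcal{Z}$. Then: (a) $C_{\alpha,k}(t+T_\beta\cdot 1_\beta)=C_{\alpha,k}(t)$ for all $\alpha,\beta\in\{1,\dots,m\}$, all $k\in\mathbb{N}$ and all $t\in\mathcal{Z}$; (b) $C_{\alpha,T_\alpha}(t)\,C_{\beta,T_\beta}(t)=C_{\beta,T_\beta}(t)\,C_{\alpha,T_\alpha}(t)$ for all $\alpha,\beta\in\{1,\dots,m\}$ and all $t\in\mathcal{Z}$; (c) $\chi(t+T_\alpha\cdot 1_\alpha,s)=\chi(t,s)\,C_{\alpha,T_\alpha}(s)$ for all $\alpha\in\{1,\dots,m\}$ and all $t,s\in\mathcal{Z}$ with $t\ge s$.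
   Context: $\mathbb{N}=\{0,1,2,\dots\}$. For $\alpha\in\{1,\dots,m\}$, $1_\alpha\in\mathbb{Z}^m$ is the vector with $1$ in position $\alpha$ and $0$ elsewhere. On $\mathbb{Z}^m$, $s\le t$ means $s^\alpha\le t^\alpha$ for all $\alpha$. For $\alpha\in\{1,\dots,m\}$, $k\in\mathbb{N}$, $t\in\mathcal{Z}$, define $C_{\alpha,0}(t)=I_n$ and, for $k\ge1$, $C_{\alpha,k}(t)=\prod_{j=1}^{k}A_\alpha(t+(k-j)\cdot 1_\alpha)=A_\alpha(t+(k-1)1_\alpha)\cdots A_\alpha(t+1_\alpha)A_\alpha(t)$. Under the compatibility relations, for each $s\in\mathcal{Z}$ there is a unique function $\chi(\cdot,s)\colon\{t\in\mathcal{Z}\mid t\ge s\}\to\mathcal{M}_n(K)$ with $\chi(s,s)=I_n$ and $\chi(t+1_\alpha,s)=A_\alpha(t)\chi(t,s)$ for all $t\ge s$ and all $\alpha$; $\chi$ is called the transition (fundamental) matrix. *)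

theory Defs
  imports "HOL-Analysis.Analysis"
begin

text \<open>Index set {1..m} is modelled by a finite type 'm; Z^m is int^'m.\<close>

definition unitv :: "'m::finite \<Rightarrow> int^'m" where
  "unitv \<alpha> = (\<chi> i. if i = \<alpha> then 1 else 0)"

definition vle :: "int^'m::finite \<Rightarrow> int^'m \<Rightarrow> bool" where
  "vle s t \<longleftrightarrow> (\<forall>i. s $ i \<le> t $ i)"

definition admissible_domain :: "(int^'m::finite) set \<Rightarrow> bool" where
  "admissible_domain Z \<longleftrightarrow> Z = UNIV \<or> (\<exists>t1. Z = {t. vle t1 t})"

fun Cmat :: "('m::finite \<Rightarrow> int^'m \<Rightarrow> 'a::comm_ring_1^'n^'n) \<Rightarrow> 'm \<Rightarrow> nat \<Rightarrow> int^'m \<Rightarrow> 'a^'n^'n" where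
  "Cmat A \<alpha> 0 t = mat 1"
| "Cmat A \<alpha> (Suc k) t = A \<alpha> (t + of_nat k *s unitv \<alpha>) ** Cmat A \<alpha> k t"

text \<open>X is the transition matrix chi(.,s): chi(s,s)=I and chi(t+1_alpha,s)=A_alpha(t) chi(t,s) for t >= s.\<close>
definition is_transition :: "('m::finite \<Rightarrow> int^'m \<Rightarrow> 'a::comm_ring_1^'n^'n) \<Rightarrow> int^'m \<Rightarrow> (int^'m \<Rightarrow> 'a^'n^'n) \<Rightarrow> bool" where
  "is_transition A s X \<longleftrightarrow> X s = mat 1 \<and> (\<forall>t \<alpha>. vle s t \<longrightarrow> X (t + unitv \<alpha>) = A \<alpha> t ** X t)"

end

theory Submission
  imports Defs
begin

text \<open>
  The compatibility relation
  lets a single factor A_beta be pushed through a product C_alpha,k, and then a whole product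
  C_beta,l: the two ways of walking around a k x l rectangle give the same matrix. With
  k = T_alpha, l = T_beta and periodicity of C this is the commutation (b). For (c), both sides
  of the identity satisfy the defining recurrence of chi(., s) and agree at s, because chi along
  the alpha-axis is C_alpha; a transition matrix is determined by its recurrence and initial value.
\<close>

lemma unitv_nth: "unitv \<alpha> $ i = (if i = \<alpha> then 1 else 0)"
  by (simp add: unitv_def)

lemma vle_trans: "vle r s \<Longrightarrow> vle s t \<Longrightarrow> vle r t"
  unfolding vle_def by (meson order_trans)

lemma vle_add_unitv_multiple: "vle t (t + of_nat k *s unitv \<alpha>)"
  by (simp add: vle_def unitv_nth)

lemma admissible_domain_upward_closed:
  "admissible_domain Z \<Longrightarrow> t \<in> Z \<Longrightarrow> vle t u \<Longrightarrow> u \<in> Z"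
  unfolding admissible_domain_def vle_def by (auto intro: order_trans)

lemma add_Suc_unitv_multiple:
  "t + of_nat (Suc k) *s unitv \<alpha> = (t + of_nat k *s unitv \<alpha>) + unitv \<alpha>"
  by (simp add: vector_sadd_rdistrib algebra_simps)

lemma Cmat_shift_periodic:
  assumes "\<And>u. vle t u \<Longrightarrow> A \<alpha> (u + p) = A \<alpha> u"
  shows "Cmat A \<alpha> k (t + p) = Cmat A \<alpha> k t"
proof (induction k)
  case (Suc k)
  have "A \<alpha> (t + p + of_nat k *s unitv \<alpha>) = A \<alpha> (t + of_nat k *s unitv \<alpha>)"
    using assms[OF vle_add_unitv_multiple] by (simp add: add_ac)
  with Suc.IH show ?case by simp
qed simp

lemma Cmat_exchange_factor:
  assumes compat: "\<And>u. vle t u \<Longrightarrow>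
      A \<alpha> (u + unitv \<beta>) ** A \<beta> u = A \<beta> (u + unitv \<alpha>) ** A \<alpha> u"
  shows "Cmat A \<alpha> k (t + unitv \<beta>) ** A \<beta> t = A \<beta> (t + of_nat k *s unitv \<alpha>) ** Cmat A \<alpha> k t"
proof (induction k)
  case 0
  show ?case by (simp add: matrix_mul_lid matrix_mul_rid)
next
  case (Suc k)
  let ?u = "t + of_nat k *s unitv \<alpha>"
  have "Cmat A \<alpha> (Suc k) (t + unitv \<beta>) ** A \<beta> t
      = A \<alpha> (?u + unitv \<beta>) ** (Cmat A \<alpha> k (t + unitv \<beta>) ** A \<beta> t)"
    by (simp add: matrix_mul_assoc add_ac)
  also have "\<dots> = (A \<alpha> (?u + unitv \<beta>) ** A \<beta> ?u) ** Cmat A \<alpha> k t"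
    by (simp add: Suc.IH matrix_mul_assoc)
  also have "\<dots> = (A \<beta> (?u + unitv \<alpha>) ** A \<alpha> ?u) ** Cmat A \<alpha> k t"
    by (simp add: compat[OF vle_add_unitv_multiple])
  also have "\<dots> = A \<beta> (t + of_nat (Suc k) *s unitv \<alpha>) ** Cmat A \<alpha> (Suc k) t"
    by (simp only: add_Suc_unitv_multiple Cmat.simps matrix_mul_assoc)
  finally show ?case .
qed

lemma Cmat_exchange:
  assumes compat: "\<And>u \<alpha> \<beta>. vle t u \<Longrightarrow>
      A \<alpha> (u + unitv \<beta>) ** A \<beta> u = A \<beta> (u + unitv \<alpha>) ** A \<alpha> u"
  shows "Cmat A \<alpha> k (t + of_nat l *s unitv \<beta>) ** Cmat A \<beta> l t
       = Cmat A \<beta> l (t + of_nat k *s unitv \<alpha>) ** Cmat A \<alpha> k t"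
proof (induction l)
  case 0
  show ?case by (simp add: matrix_mul_lid matrix_mul_rid)
next
  case (Suc l)
  let ?u = "t + of_nat l *s unitv \<beta>"
  have compat_u: "A \<alpha> (v + unitv \<beta>) ** A \<beta> v = A \<beta> (v + unitv \<alpha>) ** A \<alpha> v" if "vle ?u v" for v
    using compat vle_trans[OF vle_add_unitv_multiple that] by blast
  have "Cmat A \<alpha> k (t + of_nat (Suc l) *s unitv \<beta>) ** Cmat A \<beta> (Suc l) t
      = (Cmat A \<alpha> k (?u + unitv \<beta>) ** A \<beta> ?u) ** Cmat A \<beta> l t"
    by (simp only: add_Suc_unitv_multiple Cmat.simps matrix_mul_assoc)
  also have "\<dots> = A \<beta> (?u + of_nat k *s unitv \<alpha>) ** (Cmat A \<alpha> k ?u ** Cmat A \<beta> l t)"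
    by (simp add: Cmat_exchange_factor[OF compat_u] matrix_mul_assoc)
  also have "\<dots> = Cmat A \<beta> (Suc l) (t + of_nat k *s unitv \<alpha>) ** Cmat A \<alpha> k t"
    by (simp add: Suc.IH matrix_mul_assoc algebra_simps)
  finally show ?case .
qed

lemma transition_along_axis:
  assumes "is_transition A s X"
  shows "X (s + of_nat k *s unitv \<alpha>) = Cmat A \<alpha> k s"
proof (induction k)
  case 0
  show ?case using assms by (simp add: is_transition_def)
next
  case (Suc k)
  then show ?case
    using assms vle_add_unitv_multiple[of s k \<alpha>]
    by (simp only: add_Suc_unitv_multiple Cmat.simps is_transition_def)
qed

lemma recurrence_unique:
  fixes F G :: "int^'m::finite \<Rightarrow> 'a::comm_ring_1^'n^'n"
  assumes F: "\<And>t \<beta>. vle s t \<Longrightarrow> F (t + unitv \<beta>) = A \<beta> t ** F t"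
    and G: "\<And>t \<beta>. vle s t \<Longrightarrow> G (t + unitv \<beta>) = A \<beta> t ** G t"
    and base: "F s = G s"
  shows "vle s t \<Longrightarrow> F t = G t"
proof (induction "\<Sum>i\<in>UNIV. nat (t $ i - s $ i)" arbitrary: t)
  case 0
  then have "\<forall>i. t $ i = s $ i"
    unfolding vle_def by (simp add: sum_eq_0_iff) (meson antisym)
  then have "t = s" by (simp add: vec_eq_iff)
  then show ?case using base by simp
next
  case (Suc n)
  then obtain i where "t $ i \<noteq> s $ i"
    by (metis (no_types, lifting) diff_self nat_0 nat_zero_as_int sum.neutral old.nat.distinct(1))
  then have i: "s $ i < t $ i"
    using Suc.prems unfolding vle_def by (metis antisym not_less)
  define t' where "t' = t - unitv i"
  have t: "t = t' + unitv i"
    by (simp add: t'_def)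
  have t': "vle s t'"
    using Suc.prems i unfolding vle_def t'_def by (auto simp: unitv_nth)
  have "(\<Sum>j\<in>UNIV. nat (t $ j - s $ j)) = (\<Sum>j\<in>UNIV. nat (t' $ j - s $ j) + (if j = i then 1 else 0))"
    using i by (intro sum.cong) (auto simp: t'_def unitv_nth)
  then have "n = (\<Sum>j\<in>UNIV. nat (t' $ j - s $ j))"
    using Suc.hyps(2) by (simp add: sum.distrib)
  then have "F t' = G t'"
    using Suc.hyps(1) t' by blast
  then show ?case using F[OF t'] G[OF t'] t by simp
qed

lemma transition_shift_periodic:
  assumes X: "is_transition A s X"
    and per: "\<And>t \<beta>. vle s t \<Longrightarrow> A \<beta> (t + of_nat k *s unitv \<alpha>) = A \<beta> t"
    and st: "vle s t"
  shows "X (t + of_nat k *s unitv \<alpha>) = X t ** Cmat A \<alpha> k s"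
proof -
  have shifted: "X ((u + unitv \<beta>) + of_nat k *s unitv \<alpha>) = A \<beta> u ** X (u + of_nat k *s unitv \<alpha>)"
    if "vle s u" for u \<beta>
  proof -
    have "vle s (u + of_nat k *s unitv \<alpha>)"
      using vle_trans[OF that vle_add_unitv_multiple] .
    then have "X ((u + of_nat k *s unitv \<alpha>) + unitv \<beta>)
        = A \<beta> (u + of_nat k *s unitv \<alpha>) ** X (u + of_nat k *s unitv \<alpha>)"
      using X by (simp add: is_transition_def)
    then show ?thesis by (simp add: per[OF that] add_ac)
  qed
  have unshifted: "X (u + unitv \<beta>) ** Cmat A \<alpha> k s = A \<beta> u ** (X u ** Cmat A \<alpha> k s)"
    if "vle s u" for u \<beta>
    using X that by (simp add: is_transition_def matrix_mul_assoc)
  have "X (s + of_nat k *s unitv \<alpha>) = X s ** Cmat A \<alpha> k s"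
    using X transition_along_axis[OF X] by (simp add: is_transition_def matrix_mul_lid)
  from recurrence_unique[OF shifted unshifted this st] show ?thesis .
qed

theorem proposition2p7:
  fixes Z :: "(int^'m::finite) set"
    and A :: "'m \<Rightarrow> int^'m \<Rightarrow> 'a::real_normed_field^'n::finite^'n"
    and T :: "'m \<Rightarrow> nat"
  assumes Z: "admissible_domain Z"
    and compat: "\<And>t \<alpha> \<beta>. t \<in> Z \<Longrightarrow>
       A \<alpha> (t + unitv \<beta>) ** A \<beta> t = A \<beta> (t + unitv \<alpha>) ** A \<alpha> t"
    and Tnz: "T \<noteq> (\<lambda>_. 0)"
    and per: "\<And>t \<alpha> \<beta>. t \<in> Z \<Longrightarrow> A \<alpha> (t + of_nat (T \<beta>) *s unitv \<beta>) = A \<alpha> t"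
  shows "(\<forall>\<alpha> \<beta> k. \<forall>t\<in>Z. Cmat A \<alpha> k (t + of_nat (T \<beta>) *s unitv \<beta>) = Cmat A \<alpha> k t)
       \<and> (\<forall>\<alpha> \<beta>. \<forall>t\<in>Z. Cmat A \<alpha> (T \<alpha>) t ** Cmat A \<beta> (T \<beta>) t
                        = Cmat A \<beta> (T \<beta>) t ** Cmat A \<alpha> (T \<alpha>) t)
       \<and> (\<forall>s\<in>Z. \<forall>X. is_transition A s X \<longrightarrow>
            (\<forall>\<alpha>. \<forall>t\<in>Z. vle s t \<longrightarrow> X (t + of_nat (T \<alpha>) *s unitv \<alpha>) = X t ** Cmat A \<alpha> (T \<alpha>) s))"
proof -
  note upward = admissible_domain_upward_closed[OF Z]
  have C_periodic: "Cmat A \<alpha> k (t + of_nat (T \<beta>) *s unitv \<beta>) = Cmat A \<alpha> k t"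
    if "t \<in> Z" for \<alpha> \<beta> k t
    using Cmat_shift_periodic per upward[OF that] by blast
  have "Cmat A \<alpha> (T \<alpha>) t ** Cmat A \<beta> (T \<beta>) t = Cmat A \<beta> (T \<beta>) t ** Cmat A \<alpha> (T \<alpha>) t"
    if "t \<in> Z" for \<alpha> \<beta> t
    using Cmat_exchange[of t A \<alpha> "T \<alpha>" "T \<beta>" \<beta>] compat upward[OF that] C_periodic[OF that]
    by simp
  moreover have "X (t + of_nat (T \<alpha>) *s unitv \<alpha>) = X t ** Cmat A \<alpha> (T \<alpha>) s"
    if "s \<in> Z" "is_transition A s X" "vle s t" for s X \<alpha> t
    using transition_shift_periodic[OF that(2) _ that(3)] per upward[OF that(1)] by blast
  ultimately show ?thesis using C_periodic by blast
qed

end
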